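(* Let $A\in G(n\times m)$, $N\in G(n)$ and $M\in G(m)$. Then $\mathrm{troprank}(A)=\mathrm{troprank}(N\odot A\odot M)$, and $\mathrm{troprank}(A)$ equals the number of columns of $A$ having at least one finite entry.
   Context: $\mathbb{T}=\mathbb{R}\cup\{-\infty\}$ with $a\oplus b=\max\{a,b\}$, $a\odot b=a+b$, and tropical matrix product $(A\odot B)_{ij}=\bigoplus_k a_{ik}\odot b_{kj}$. $G(r\times s)$ is the set of $r\times s$ matrices over $\mathbb{T}$ with at most one finite entry in each row; $G(r)$ is the set of $r\times r$ matrices with exactly one finite entry in each row and each column. The tropical determinant of a square matrix is $\bigoplus_{\sigma}\bigodot_i A_{i,\sigma(i)}$; a minor vanishes if it equals $-\infty$. $\mathrm{troprank}(A)=k$ iff all $(k+1)\times(k+1)$ minors vanish and some $k\times k$ minor does not vanish. *)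

theory Defs
  imports "HOL-Library.Extended_Real"
begin

text \<open>Tropical semiring T = R \<union> {-\<infinity>}, modelled as the extended reals without +\<infinity>.
  Matrices are functions nat \<Rightarrow> nat \<Rightarrow> ereal with explicit dimensions
  (rows indexed by {..<r}, columns by {..<s}).\<close>

definition trop_mat :: "nat \<Rightarrow> nat \<Rightarrow> (nat \<Rightarrow> nat \<Rightarrow> ereal) \<Rightarrow> bool" where
  "trop_mat r s A \<longleftrightarrow> (\<forall>i<r. \<forall>j<s. A i j \<noteq> \<infinity>)"

definition trop_mult :: "nat \<Rightarrow> (nat \<Rightarrow> nat \<Rightarrow> ereal) \<Rightarrow> (nat \<Rightarrow> nat \<Rightarrow> ereal) \<Rightarrow> (nat \<Rightarrow> nat \<Rightarrow> ereal)" where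
  "trop_mult s A B = (\<lambda>i j. SUP k\<in>{..<s}. A i k + B k j)"

definition G_rect :: "nat \<Rightarrow> nat \<Rightarrow> (nat \<Rightarrow> nat \<Rightarrow> ereal) \<Rightarrow> bool" where
  "G_rect r s A \<longleftrightarrow> trop_mat r s A \<and>
     (\<forall>i<r. card {j. j < s \<and> A i j \<noteq> -\<infinity>} \<le> 1)"

definition G_sq :: "nat \<Rightarrow> (nat \<Rightarrow> nat \<Rightarrow> ereal) \<Rightarrow> bool" where
  "G_sq r A \<longleftrightarrow> trop_mat r r A \<and>
     (\<forall>i<r. card {j. j < r \<and> A i j \<noteq> -\<infinity>} = 1) \<and>
     (\<forall>j<r. card {i. i < r \<and> A i j \<noteq> -\<infinity>} = 1)"

definition trop_minor :: "(nat \<Rightarrow> nat \<Rightarrow> ereal) \<Rightarrow> nat set \<Rightarrow> nat set \<Rightarrow> ereal" where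
  "trop_minor A I J = Sup ((\<lambda>\<sigma>. \<Sum>i\<in>I. A i (\<sigma> i)) ` {\<sigma>. bij_betw \<sigma> I J \<and> (\<forall>i. i \<notin> I \<longrightarrow> \<sigma> i = 0)})"

definition is_minor_idx :: "nat \<Rightarrow> nat \<Rightarrow> nat \<Rightarrow> nat set \<Rightarrow> nat set \<Rightarrow> bool" where
  "is_minor_idx r s k I J \<longleftrightarrow> I \<subseteq> {..<r} \<and> J \<subseteq> {..<s} \<and> card I = k \<and> card J = k"

definition has_troprank :: "nat \<Rightarrow> nat \<Rightarrow> (nat \<Rightarrow> nat \<Rightarrow> ereal) \<Rightarrow> nat \<Rightarrow> bool" where
  "has_troprank r s A k \<longleftrightarrow>
     (\<forall>I J. is_minor_idx r s (k+1) I J \<longrightarrow> trop_minor A I J = -\<infinity>) \<and>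
     (\<exists>I J. is_minor_idx r s k I J \<and> trop_minor A I J \<noteq> -\<infinity>)"

end

theory Submission
  imports Defs
begin

text \<open>In a matrix of G(r x s) the finite entries of distinct columns lie in distinct rows. Picking
  one finite entry in each of the c columns that have one yields a c x c submatrix whose
  determinant has a finite term. Any larger square submatrix contains a column without finite
  entries, which kills every term of its determinant. Multiplying by monomial matrices
  N \<in> G(n) and M \<in> G(m) only permutes the rows and columns of the pattern of finite entries,
  so N \<odot> A \<odot> M lies in G(n x m) again and has as many columns with a finite entry as A.\<close>

lemma sum_ereal_eq_MInfty_iff:
  fixes f :: "'a \<Rightarrow> ereal"
  assumes "finite I" and "\<And>i. i \<in> I \<Longrightarrow> f i \<noteq> \<infinity>"
  shows "sum f I = -\<infinity> \<longleftrightarrow> (\<exists>i\<in>I. f i = -\<infinity>)"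
  using assms by (induction I rule: finite_induct) (auto simp: sum_Pinfty)

lemma SUP_ereal_eq_MInfty_iff:
  fixes f :: "'a \<Rightarrow> ereal"
  shows "(SUP k\<in>K. f k) = -\<infinity> \<longleftrightarrow> (\<forall>k\<in>K. f k = -\<infinity>)"
  using SUP_bot_conv(1)[of f K] by (simp add: bot_ereal_def)

lemma SUP_ereal_finite_neq_PInfty:
  fixes f :: "'a \<Rightarrow> ereal"
  assumes "finite K" and "\<And>k. k \<in> K \<Longrightarrow> f k \<noteq> \<infinity>"
  shows "(SUP k\<in>K. f k) \<noteq> \<infinity>"
proof (cases "K = {}")
  case False
  then have "(SUP k\<in>K. f k) \<in> f ` K"
    using assms(1) by (simp add: cSup_eq_Max)
  then show ?thesis using assms(2) by (metis imageE)
qed (simp add: bot_ereal_def)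

lemma trop_mat_trop_mult:
  assumes "trop_mat r s A" and "trop_mat s t B"
  shows "trop_mat r t (trop_mult s A B)"
  using assms unfolding trop_mat_def trop_mult_def
  by (intro allI impI SUP_ereal_finite_neq_PInfty) auto

lemma trop_mult_neq_MInfty_iff:
  assumes "trop_mat r s A" and "trop_mat s t B" and "i < r" and "j < t"
  shows "trop_mult s A B i j \<noteq> -\<infinity> \<longleftrightarrow> (\<exists>k<s. A i k \<noteq> -\<infinity> \<and> B k j \<noteq> -\<infinity>)"
  using assms unfolding trop_mat_def trop_mult_def SUP_ereal_eq_MInfty_iff by auto

lemma trop_minor_eq_MInfty:
  assumes "finite I" and "\<And>i j. i \<in> I \<Longrightarrow> j \<in> J \<Longrightarrow> A i j \<noteq> \<infinity>"
    and "j \<in> J" and "\<And>i. i \<in> I \<Longrightarrow> A i j = -\<infinity>"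
  shows "trop_minor A I J = -\<infinity>"
  unfolding trop_minor_def SUP_ereal_eq_MInfty_iff
proof (intro ballI)
  fix \<sigma> assume "\<sigma> \<in> {\<sigma>. bij_betw \<sigma> I J \<and> (\<forall>i. i \<notin> I \<longrightarrow> \<sigma> i = 0)}"
  then have \<sigma>: "bij_betw \<sigma> I J" by simp
  then obtain i where "i \<in> I" "\<sigma> i = j"
    using \<open>j \<in> J\<close> by (metis bij_betw_iff_bijections)
  moreover have "A k (\<sigma> k) \<noteq> \<infinity>" if "k \<in> I" for k
    using \<sigma> that assms(2) bij_betwE by blast
  ultimately show "(\<Sum>i\<in>I. A i (\<sigma> i)) = -\<infinity>"
    using assms(1,4) by (subst sum_ereal_eq_MInfty_iff) auto
qed

lemma trop_minor_neq_MInfty: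
  assumes "finite I" and "bij_betw \<sigma> I J"
    and "\<And>i. i \<in> I \<Longrightarrow> A i (\<sigma> i) \<noteq> -\<infinity>" and "\<And>i. i \<in> I \<Longrightarrow> A i (\<sigma> i) \<noteq> \<infinity>"
  shows "trop_minor A I J \<noteq> -\<infinity>"
proof -
  define \<sigma>' where "\<sigma>' i = (if i \<in> I then \<sigma> i else 0)" for i
  have "bij_betw \<sigma>' I J"
    using assms(2) by (rule bij_betw_cong[THEN iffD1, rotated]) (simp add: \<sigma>'_def)
  moreover have "(\<Sum>i\<in>I. A i (\<sigma>' i)) \<noteq> -\<infinity>"
    using assms by (subst sum_ereal_eq_MInfty_iff) (auto simp: \<sigma>'_def)
  ultimately show ?thesis
    unfolding trop_minor_def SUP_ereal_eq_MInfty_iff by (auto simp: \<sigma>'_def)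
qed

definition finite_entry_cols :: "nat \<Rightarrow> nat \<Rightarrow> (nat \<Rightarrow> nat \<Rightarrow> ereal) \<Rightarrow> nat set" where
  "finite_entry_cols r s A = {j. j < s \<and> (\<exists>i<r. A i j \<noteq> -\<infinity>)}"

lemma finite_entry_cols_subset: "finite_entry_cols r s A \<subseteq> {..<s}"
  unfolding finite_entry_cols_def by auto

lemma trop_minor_eq_MInfty_if_card_gt:
  assumes "trop_mat r s A" and "is_minor_idx r s k I J"
    and "card (finite_entry_cols r s A) < k"
  shows "trop_minor A I J = -\<infinity>"
proof -
  have I: "I \<subseteq> {..<r}" and J: "J \<subseteq> {..<s}" and "card J = k"
    using assms(2) unfolding is_minor_idx_def by auto
  then have "\<not> J \<subseteq> finite_entry_cols r s A"
    using assms(3) card_mono[of "finite_entry_cols r s A" J] finite_entry_cols_subset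
    by (metis finite_lessThan finite_subset not_le)
  then obtain j where "j \<in> J" "j \<notin> finite_entry_cols r s A" by blast
  with I J show ?thesis
    using assms(1) finite_subset[OF I]
    by (intro trop_minor_eq_MInfty[where j = j]) (auto simp: trop_mat_def finite_entry_cols_def)
qed

lemma G_rect_finite_entries_same_col:
  assumes "G_rect r s A" and "i < r" and "j < s" and "j' < s"
    and "A i j \<noteq> -\<infinity>" and "A i j' \<noteq> -\<infinity>"
  shows "j = j'"
proof -
  have "card {j. j < s \<and> A i j \<noteq> -\<infinity>} \<le> Suc 0"
    using assms(1,2) unfolding G_rect_def by auto
  then show ?thesis
    using assms(3-) by (auto simp: card_le_Suc0_iff_eq)
qed

lemma G_rect_nonvanishing_minor:
  assumes "G_rect r s A"
  defines "C \<equiv> finite_entry_cols r s A"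
  obtains I where "is_minor_idx r s (card C) I C" and "trop_minor A I C \<noteq> -\<infinity>"
proof -
  define \<rho> where "\<rho> j = (SOME i. i < r \<and> A i j \<noteq> -\<infinity>)" for j
  have \<rho>: "\<rho> j < r \<and> A (\<rho> j) j \<noteq> -\<infinity>" if "j \<in> C" for j
  proof -
    have "\<exists>i. i < r \<and> A i j \<noteq> -\<infinity>"
      using that unfolding C_def finite_entry_cols_def by auto
    then show ?thesis
      unfolding \<rho>_def by (rule someI_ex)
  qed
  have C: "C \<subseteq> {..<s}"
    unfolding C_def by (rule finite_entry_cols_subset)
  have inj: "inj_on \<rho> C"
    using \<rho> C G_rect_finite_entries_same_col[OF assms(1)] by (intro inj_onI) (metis lessThan_iff subsetD)
  have "bij_betw (the_inv_into C \<rho>) (\<rho> ` C) C"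
    using inj by (simp add: bij_betw_the_inv_into inj_on_imp_bij_betw)
  moreover have "A (\<rho> j) (the_inv_into C \<rho> (\<rho> j)) \<noteq> \<infinity>" if "j \<in> C" for j
    using assms(1) \<rho> C that by (auto simp: the_inv_into_f_f[OF inj] G_rect_def trop_mat_def)
  ultimately have "trop_minor A (\<rho> ` C) C \<noteq> -\<infinity>"
    using \<rho> C finite_subset[OF C]
    by (intro trop_minor_neq_MInfty) (auto simp: the_inv_into_f_f[OF inj])
  moreover have "is_minor_idx r s (card C) (\<rho> ` C) C"
    using \<rho> C card_image[OF inj] unfolding is_minor_idx_def by auto
  ultimately show thesis
    using that by simp
qed

lemma has_troprank_G_rect:
  assumes "G_rect r s A"
  shows "has_troprank r s A (card (finite_entry_cols r s A))"
proof -
  have "trop_mat r s A"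
    using assms unfolding G_rect_def by simp
  then show ?thesis
    unfolding has_troprank_def
    using trop_minor_eq_MInfty_if_card_gt G_rect_nonvanishing_minor[OF assms] by (metis less_add_one)
qed

lemma G_sq_obtains_perm:
  assumes "G_sq n N"
  obtains \<pi> where "bij_betw \<pi> {..<n} {..<n}"
    and "\<And>i k. i < n \<Longrightarrow> k < n \<Longrightarrow> N i k \<noteq> -\<infinity> \<longleftrightarrow> k = \<pi> i"
proof -
  define \<pi> where "\<pi> i = the_elem {k. k < n \<and> N i k \<noteq> -\<infinity>}" for i
  have row: "{k. k < n \<and> N i k \<noteq> -\<infinity>} = {\<pi> i}" if "i < n" for i
  proof -
    have "card {k. k < n \<and> N i k \<noteq> -\<infinity>} = 1"
      using assms that unfolding G_sq_def by auto
    then obtain k where "{k. k < n \<and> N i k \<noteq> -\<infinity>} = {k}"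
      by (auto simp: card_1_singleton_iff)
    then show ?thesis
      unfolding \<pi>_def by simp
  qed
  then have finite_iff: "N i k \<noteq> -\<infinity> \<longleftrightarrow> k = \<pi> i" if "i < n" "k < n" for i k
    using that by (auto simp: set_eq_iff)
  have maps_to: "\<pi> ` {..<n} \<subseteq> {..<n}"
    using row by (auto simp: set_eq_iff)
  have "inj_on \<pi> {..<n}"
  proof (rule inj_onI)
    fix i i' assume "i \<in> {..<n}" "i' \<in> {..<n}" "\<pi> i = \<pi> i'"
    moreover have "card {a. a < n \<and> N a (\<pi> i) \<noteq> -\<infinity>} \<le> Suc 0"
      using assms maps_to \<open>i \<in> {..<n}\<close> unfolding G_sq_def by auto
    ultimately show "i = i'"
      using finite_iff maps_to by (auto simp: card_le_Suc0_iff_eq)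
  qed
  with maps_to have "bij_betw \<pi> {..<n} {..<n}"
    by (simp add: bij_betw_def endo_inj_surj)
  from this finite_iff show thesis
    by (rule that)
qed

lemma G_sq_transpose: "G_sq n N \<Longrightarrow> G_sq n (\<lambda>i j. N j i)"
  unfolding G_sq_def trop_mat_def by auto

lemma G_rect_permuted_pattern:
  assumes "G_rect r s A" and "trop_mat r s B"
    and "bij_betw \<pi> {..<r} {..<r}" and "bij_betw \<tau> {..<s} {..<s}"
    and "\<And>i j. i < r \<Longrightarrow> j < s \<Longrightarrow> B i j \<noteq> -\<infinity> \<longleftrightarrow> A (\<pi> i) (\<tau> j) \<noteq> -\<infinity>"
  shows "G_rect r s B"
  unfolding G_rect_def
proof (intro conjI allI impI)
  fix i assume "i < r"
  then have "\<pi> i < r"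
    using assms(3) bij_betwE by blast
  have "card {j. j < s \<and> B i j \<noteq> -\<infinity>} \<le> card {j. j < s \<and> A (\<pi> i) j \<noteq> -\<infinity>}"
  proof (rule card_inj_on_le)
    show "inj_on \<tau> {j. j < s \<and> B i j \<noteq> -\<infinity>}"
      using assms(4) by (auto simp: bij_betw_def intro: inj_on_subset)
    show "\<tau> ` {j. j < s \<and> B i j \<noteq> -\<infinity>} \<subseteq> {j. j < s \<and> A (\<pi> i) j \<noteq> -\<infinity>}"
      using assms(4,5) \<open>i < r\<close> bij_betwE by fastforce
  qed simp
  also have "\<dots> \<le> 1"
    using assms(1) \<open>\<pi> i < r\<close> unfolding G_rect_def by blast
  finally show "card {j. j < s \<and> B i j \<noteq> -\<infinity>} \<le> 1" .
qed (fact assms(2))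

lemma card_finite_entry_cols_permuted_pattern:
  assumes "bij_betw \<pi> {..<r} {..<r}" and "bij_betw \<tau> {..<s} {..<s}"
    and "\<And>i j. i < r \<Longrightarrow> j < s \<Longrightarrow> B i j \<noteq> -\<infinity> \<longleftrightarrow> A (\<pi> i) (\<tau> j) \<noteq> -\<infinity>"
  shows "card (finite_entry_cols r s B) = card (finite_entry_cols r s A)"
proof (rule bij_betw_same_card)
  have "\<tau> ` finite_entry_cols r s B = finite_entry_cols r s A"
  proof (intro equalityI subsetI)
    fix j' assume "j' \<in> \<tau> ` finite_entry_cols r s B"
    then show "j' \<in> finite_entry_cols r s A"
      using assms bij_betwE unfolding finite_entry_cols_def by fastforce
  next
    fix j' assume "j' \<in> finite_entry_cols r s A"
    then obtain i' where "j' < s" "i' < r" "A i' j' \<noteq> -\<infinity>"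
      unfolding finite_entry_cols_def by blast
    moreover obtain i where "i < r" "\<pi> i = i'"
      using bij_betw_imp_surj_on[OF assms(1)] \<open>i' < r\<close> by (metis imageE lessThan_iff)
    moreover obtain j where "j < s" "\<tau> j = j'"
      using bij_betw_imp_surj_on[OF assms(2)] \<open>j' < s\<close> by (metis imageE lessThan_iff)
    ultimately show "j' \<in> \<tau> ` finite_entry_cols r s B"
      using assms(3) unfolding finite_entry_cols_def by blast
  qed
  then show "bij_betw \<tau> (finite_entry_cols r s B) (finite_entry_cols r s A)"
    by (rule bij_betw_subset[OF assms(2) finite_entry_cols_subset])
qed

lemma trop_mult_G_sq_permuted_pattern:
  assumes "trop_mat n m A" and "G_sq n N" and "G_sq m M"
  obtains \<pi> \<tau> where "bij_betw \<pi> {..<n} {..<n}" and "bij_betw \<tau> {..<m} {..<m}"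
    and "\<And>i j. i < n \<Longrightarrow> j < m \<Longrightarrow>
      trop_mult m (trop_mult n N A) M i j \<noteq> -\<infinity> \<longleftrightarrow> A (\<pi> i) (\<tau> j) \<noteq> -\<infinity>"
proof -
  obtain \<pi> where \<pi>: "bij_betw \<pi> {..<n} {..<n}"
    and N: "\<And>i k. i < n \<Longrightarrow> k < n \<Longrightarrow> N i k \<noteq> -\<infinity> \<longleftrightarrow> k = \<pi> i"
    using G_sq_obtains_perm[OF assms(2)] by blast
  obtain \<tau> where \<tau>: "bij_betw \<tau> {..<m} {..<m}"
    and M: "\<And>j k. j < m \<Longrightarrow> k < m \<Longrightarrow> M k j \<noteq> -\<infinity> \<longleftrightarrow> k = \<tau> j"
    using G_sq_obtains_perm[OF G_sq_transpose[OF assms(3)]] by blast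
  have N_mat: "trop_mat n n N" and M_mat: "trop_mat m m M"
    using assms(2,3) unfolding G_sq_def by simp_all
  have NA: "trop_mat n m (trop_mult n N A)"
    using N_mat assms(1) by (rule trop_mat_trop_mult)
  have NA_iff: "trop_mult n N A i k \<noteq> -\<infinity> \<longleftrightarrow> A (\<pi> i) k \<noteq> -\<infinity>" if "i < n" "k < m" for i k
    using that N bij_betwE[OF \<pi>] by (auto simp: trop_mult_neq_MInfty_iff[OF N_mat assms(1) that])
  have "trop_mult m (trop_mult n N A) M i j \<noteq> -\<infinity> \<longleftrightarrow> A (\<pi> i) (\<tau> j) \<noteq> -\<infinity>"
    if "i < n" "j < m" for i j
    unfolding trop_mult_neq_MInfty_iff[OF NA M_mat that]
    using that M NA_iff bij_betwE[OF \<tau>] by (metis lessThan_iff)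
  with \<pi> \<tau> show thesis
    by (rule that)
qed

theorem mainTheorem3:
  fixes n m :: nat and A N M :: "nat \<Rightarrow> nat \<Rightarrow> ereal"
  assumes "G_rect n m A" and "G_sq n N" and "G_sq m M"
  shows "has_troprank n m A (card {j. j < m \<and> (\<exists>i<n. A i j \<noteq> -\<infinity>)})
    \<and> has_troprank n m (trop_mult m (trop_mult n N A) M)
                       (card {j. j < m \<and> (\<exists>i<n. A i j \<noteq> -\<infinity>)})"
proof -
  let ?B = "trop_mult m (trop_mult n N A) M"
  have A_mat: "trop_mat n m A"
    using assms(1) unfolding G_rect_def by simp
  have B_mat: "trop_mat n m ?B"
    using assms(2,3) A_mat unfolding G_sq_def by (simp add: trop_mat_trop_mult)
  obtain \<pi> \<tau> where "bij_betw \<pi> {..<n} {..<n}" and "bij_betw \<tau> {..<m} {..<m}"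
    and "\<And>i j. i < n \<Longrightarrow> j < m \<Longrightarrow> ?B i j \<noteq> -\<infinity> \<longleftrightarrow> A (\<pi> i) (\<tau> j) \<noteq> -\<infinity>"
    using trop_mult_G_sq_permuted_pattern[OF A_mat assms(2,3)] by blast
  with assms(1) B_mat have B_G_rect: "G_rect n m ?B"
    and card_eq: "card (finite_entry_cols n m ?B) = card (finite_entry_cols n m A)"
    by (simp_all add: G_rect_permuted_pattern card_finite_entry_cols_permuted_pattern)
  have "has_troprank n m ?B (card (finite_entry_cols n m A))"
    using has_troprank_G_rect[OF B_G_rect] unfolding card_eq .
  with has_troprank_G_rect[OF assms(1)] show ?thesis
    unfolding finite_entry_cols_def by simp
qed

end
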